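(* For every Borel measurable set $E\subset\mathcal{S}_\varepsilon$, $$\mu_{\mathcal{S}_\varepsilon}(E)=\lim_{\tau\to0}\frac{1}{\tau^{k+r-1}}m_{\mathcal{X}_d}(E^{I_\tau}),$$ where $\mu_{\mathcal{S}_\varepsilon}(E):=\sup_{\tau>0}\frac{1}{\tau^{k+r-1}}m_{\mathcal{X}_d}(E^{I_\tau})$.
   Context: Let $k,r\ge1$, positive integers $m_1,\dots,m_k,n_1,\dots,n_r$, $d=\sum m_i+\sum n_j$, with fixed norms $\|\cdot\|$ on each $\mathbb{R}^{m_i},\mathbb{R}^{n_j}$; $\mathbb{S}^l$ is the unit sphere on $\mathbb{R}^l$. $\mathcal{X}_d$ is the space of unimodular lattices in $\mathbb{R}^d$ with invariant probability measure $m_{\mathcal{X}_d}$. $L_\varepsilon=\{(x,y)\in(\mathbb{S}^{m_1}\times\cdots\times\mathbb{S}^{m_k}\times\mathbb{S}^{n_1}\times\cdots\times\mathbb{S}^{n_{r-1}})\times\mathbb{R}^{n_r}:\|y\|^{n_r}\le\varepsilon\}$; $\mathcal{S}_\varepsilon$ is the set of $\Lambda\in\mathcal{X}_d$ having a primitive vector in $L_\varepsilon$. $a_t=\mathrm{diag}\big(e^{t_1}I_{m_1},\dots,e^{t_k}I_{m_k},e^{-t_{k+1}}I_{n_1},\dots,e^{-t_{k+r-1}}I_{n_{r-1}},e^{(\sum_{i=1}^{r-1}n_it_{k+i}-\sum_{i=1}^km_it_i)/n_r}I_{n_r}\big)$ for $t\in\mathbb{R}^{k+r-1}$; $E^I=\{a_tx:t\in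 I,x\in E\}$; $I_\tau=[0,\tau]^{k+r-1}$. *)

theory Defs
  imports "HOL-Analysis.Analysis" "HOL-Probability.Probability"
begin

text \<open>The block structure
  R^d = R^{m_1} x ... x R^{m_k} x R^{n_1} x ... x R^{n_r} is encoded by a map
  blk :: 'd => nat: block b < k is the b-th m-block, block k + j (j < r) is the
  (j+1)-th n-block. Blocks are numbered from 0.\<close>

definition blockproj :: "('d::finite \<Rightarrow> nat) \<Rightarrow> nat \<Rightarrow> real^'d \<Rightarrow> real^'d" where
  "blockproj blk b x = (\<chi> i. if blk i = b then x $ i else 0)"

definition blocksize :: "('d::finite \<Rightarrow> nat) \<Rightarrow> nat \<Rightarrow> nat" where
  "blocksize blk b = card {i. blk i = b}"

definition is_block_norm :: "('d::finite \<Rightarrow> nat) \<Rightarrow> nat \<Rightarrow> (real^'d \<Rightarrow> real) \<Rightarrow> bool" where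
  "is_block_norm blk b N \<longleftrightarrow>
     (\<forall>x. N x = N (blockproj blk b x)) \<and>
     (\<forall>x. N x = 0 \<longleftrightarrow> blockproj blk b x = 0) \<and>
     (\<forall>c x. N (c *\<^sub>R x) = \<bar>c\<bar> * N x) \<and>
     (\<forall>x y. N (x + y) \<le> N x + N y)"

definition intvecs :: "(real^'d::finite) set" where
  "intvecs = {z. \<forall>i. z $ i \<in> \<int>}"

definition unimod_mats :: "(real^'d^'d::finite) set" where
  "unimod_mats = {g. \<bar>det g\<bar> = 1}"

definition lat_of :: "real^'d^'d \<Rightarrow> (real^'d::finite) set" where
  "lat_of g = (\<lambda>z. g *v z) ` intvecs"

definition Xd :: "(real^'d::finite) set set" where
  "Xd = lat_of ` unimod_mats"

definition Xd_top :: "(real^'d::finite) set topology" where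
  "Xd_top = topology (\<lambda>U. U \<subseteq> Xd \<and>
      openin (top_of_set unimod_mats) {g \<in> unimod_mats. lat_of g \<in> U})"

definition Xd_borel :: "(real^'d::finite) set measure" where
  "Xd_borel = sigma Xd {U. openin Xd_top U}"

definition lat_act :: "real^'d^'d \<Rightarrow> (real^'d::finite) set \<Rightarrow> (real^'d) set" where
  "lat_act g L = (\<lambda>v. g *v v) ` L"

definition is_Haar_Xd :: "(real^'d::finite) set measure \<Rightarrow> bool" where
  "is_Haar_Xd m \<longleftrightarrow> prob_space m \<and> space m = Xd \<and> sets m = sets Xd_borel \<and>
     (\<forall>g A. det g = 1 \<longrightarrow> A \<in> sets m \<longrightarrow>
        emeasure m {L \<in> Xd. lat_act g L \<in> A} = emeasure m A)"

definition primitive_in :: "(real^'d::finite) set \<Rightarrow> real^'d \<Rightarrow> bool" where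
  "primitive_in L v \<longleftrightarrow> v \<in> L \<and> v \<noteq> 0 \<and>
     (\<forall>w\<in>L. \<forall>j::int. v = of_int j *\<^sub>R w \<longrightarrow> \<bar>j\<bar> = 1)"

definition Leps :: "nat \<Rightarrow> nat \<Rightarrow> ('d::finite \<Rightarrow> nat) \<Rightarrow> (nat \<Rightarrow> real^'d \<Rightarrow> real)
                     \<Rightarrow> real \<Rightarrow> (real^'d) set" where
  "Leps k r blk N \<epsilon> = {v. (\<forall>b < k + r - 1. N b v = 1) \<and>
       N (k + r - 1) v ^ blocksize blk (k + r - 1) \<le> \<epsilon>}"

definition Seps :: "nat \<Rightarrow> nat \<Rightarrow> ('d::finite \<Rightarrow> nat) \<Rightarrow> (nat \<Rightarrow> real^'d \<Rightarrow> real)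
                     \<Rightarrow> real \<Rightarrow> (real^'d) set set" where
  "Seps k r blk N \<epsilon> = {L \<in> Xd. \<exists>v. primitive_in L v \<and> v \<in> Leps k r blk N \<epsilon>}"

text \<open>t in R^{k+r-1} is t :: nat => real, coordinates 0..k+r-2 (paper's t_1..t_{k+r-1}).\<close>
definition aexp :: "nat \<Rightarrow> nat \<Rightarrow> ('d::finite \<Rightarrow> nat) \<Rightarrow> (nat \<Rightarrow> real) \<Rightarrow> nat \<Rightarrow> real" where
  "aexp k r blk t b =
     (if b < k then t b
      else if b < k + r - 1 then - t b
      else ((\<Sum>c\<in>{k..<k+r-1}. real (blocksize blk c) * t c)
            - (\<Sum>c<k. real (blocksize blk c) * t c)) / real (blocksize blk (k + r - 1)))"

definition amat :: "nat \<Rightarrow> nat \<Rightarrow> ('d::finite \<Rightarrow> nat) \<Rightarrow> (nat \<Rightarrow> real) \<Rightarrow> real^'d^'d" where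
  "amat k r blk t = (\<chi> i j. if i = j then exp (aexp k r blk t (blk i)) else 0)"

definition Itau :: "nat \<Rightarrow> nat \<Rightarrow> real \<Rightarrow> (nat \<Rightarrow> real) set" where
  "Itau k r \<tau> = {t. (\<forall>j < k + r - 1. 0 \<le> t j \<and> t j \<le> \<tau>) \<and> (\<forall>j \<ge> k + r - 1. t j = 0)}"

definition flowset :: "nat \<Rightarrow> nat \<Rightarrow> ('d::finite \<Rightarrow> nat) \<Rightarrow> (nat \<Rightarrow> real) set
                        \<Rightarrow> (real^'d) set set \<Rightarrow> (real^'d) set set" where
  "flowset k r blk I E = {lat_act (amat k r blk t) L | t L. t \<in> I \<and> L \<in> E}"

definition muS :: "(real^'d::finite) set measure \<Rightarrow> nat \<Rightarrow> nat \<Rightarrow> ('d \<Rightarrow> nat)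
                    \<Rightarrow> (real^'d) set set \<Rightarrow> ennreal" where
  "muS m k r blk E = (SUP \<tau>\<in>{0<..}. emeasure (completion m) (flowset k r blk (Itau k r \<tau>) E)
                                        / ennreal (\<tau> ^ (k + r - 1)))"

end

(*
  Write F(\<tau>) for the Haar measure of E^{I_\<tau>} and D = k + r - 1. F is monotone in \<tau>, and
  I_{n\<tau>} is covered by n^D translates of I_\<tau> by elements of the diagonal flow, so invariance
  of the measure gives F(n\<tau>) \<le> n^D F(\<tau>). Comparing a small t with a fixed t0 via
  n = \<lceil>t0/t\<rceil> gives F(t)/t^D \<ge> F(t0)/(t0 + t)^D, hence lim inf F(t)/t^D \<ge> F(t0)/t0^D for
  every t0: the ratio tends to its supremum.

  The measure theory needs E^{I_\<tau>} to be Borel. Because E \<subseteq> S_\<epsilon>, a lattice a_t L with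
  L \<in> E contains a_t v for a vector v of L_\<epsilon>, whose block norms determine t continuously;
  this writes the preimage of E^{I_\<tau>} in SL_d(R) as a countable union of Borel sets, and
  X_d carries the quotient Borel structure since g \<mapsto> g Z^d is locally injective.
*)
theory Submission
  imports Defs
begin

section \<open>The diagonal flow\<close>

lemma aexp_add: "aexp k r blk (\<lambda>j. s j + t j) b = aexp k r blk s b + aexp k r blk t b"
  unfolding aexp_def by (simp add: distrib_left sum.distrib add_divide_distrib diff_divide_distrib)

lemma aexp_zero: "aexp k r blk (\<lambda>j. 0) b = 0"
  unfolding aexp_def by simp

lemma amat_mult_vec: "amat k r blk t *v v = (\<chi> i. exp (aexp k r blk t (blk i)) * v $ i)"
  by (simp add: amat_def matrix_vector_mult_def vec_eq_iff if_distrib[of "\<lambda>x. x * _"] cong: if_cong)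

lemma amat_mult_mat: "amat k r blk t ** g = (\<chi> i j. exp (aexp k r blk t (blk i)) * g $ i $ j)"
  by (simp add: amat_def matrix_matrix_mult_def vec_eq_iff if_distrib[of "\<lambda>x. x * _"] cong: if_cong)

lemma amat_mult: "amat k r blk s ** amat k r blk t = amat k r blk (\<lambda>j. s j + t j)"
  unfolding amat_mult_mat by (simp add: amat_def vec_eq_iff aexp_add exp_add)

lemma amat_zero: "amat k r blk (\<lambda>j. 0) = mat 1"
  by (simp add: amat_def aexp_zero mat_def vec_eq_iff)

lemma amat_inverse:
  "amat k r blk (\<lambda>j. - t j) ** amat k r blk t = mat 1"
  "amat k r blk t ** amat k r blk (\<lambda>j. - t j) = mat 1"
  by (simp_all add: amat_mult amat_zero)

lemma det_amat:
  fixes blk :: "'d::finite \<Rightarrow> nat"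
  assumes r: "r \<ge> 1" and blk: "\<forall>i. blk i < k + r" and last_block: "blocksize blk (k + r - 1) > 0"
  shows "det (amat k r blk t) = 1"
proof -
  let ?s = "\<lambda>b. real (blocksize blk b)" and ?a = "aexp k r blk t"
  define D where "D = k + r - 1"
  have kr: "k + r = Suc D" "k \<le> D" using r by (auto simp: D_def)
  have "det (amat k r blk t) = exp (\<Sum>i\<in>UNIV. ?a (blk i))"
    by (subst det_diagonal) (auto simp: amat_def exp_sum)
  also have "(\<Sum>i\<in>UNIV. ?a (blk i)) = (\<Sum>b<k+r. \<Sum>i\<in>{i\<in>UNIV. blk i = b}. ?a (blk i))"
    by (rule sum.group[symmetric]) (use blk in auto)
  also have "\<dots> = (\<Sum>b<k+r. ?s b * ?a b)"
    by (rule sum.cong) (auto simp: blocksize_def)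
  also have "\<dots> = (\<Sum>b<k. ?s b * ?a b) + (\<Sum>b=k..<D. ?s b * ?a b) + ?s D * ?a D"
    using kr by (simp add: lessThan_atLeast0 sum.atLeastLessThan_concat)
  also have "\<dots> = 0"
  proof -
    have "(\<Sum>b<k. ?s b * ?a b) = (\<Sum>b<k. ?s b * t b)"
      by (rule sum.cong) (simp_all add: aexp_def)
    moreover have "(\<Sum>b=k..<D. ?s b * ?a b) = - (\<Sum>b=k..<D. ?s b * t b)"
      unfolding sum_negf[symmetric] by (rule sum.cong) (simp_all add: aexp_def D_def)
    moreover have "?s D * ?a D = (\<Sum>b=k..<D. ?s b * t b) - (\<Sum>b<k. ?s b * t b)"
      using last_block r by (simp add: aexp_def D_def lessThan_atLeast0)
    ultimately show ?thesis by linarith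
  qed
  finally show ?thesis by simp
qed

lemma lat_act_lat_of: "lat_act g (lat_of h) = lat_of (g ** h)"
  by (auto simp: lat_act_def lat_of_def image_image matrix_vector_mul_assoc)

lemma lat_act_lat_act: "lat_act a (lat_act b L) = lat_act (a ** b) L"
  by (auto simp: lat_act_def image_image matrix_vector_mul_assoc)

lemma lat_of_in_Xd: "g \<in> unimod_mats \<Longrightarrow> lat_of g \<in> Xd"
  by (simp add: Xd_def)

lemma unimod_mats_mult: "g \<in> unimod_mats \<Longrightarrow> h \<in> unimod_mats \<Longrightarrow> g ** h \<in> unimod_mats"
  by (simp add: unimod_mats_def det_mul abs_mult)

lemma det_one_in_unimod_mats: "det g = 1 \<Longrightarrow> g \<in> unimod_mats"
  by (simp add: unimod_mats_def)

lemma lat_act_in_Xd: "det g = 1 \<Longrightarrow> L \<in> Xd \<Longrightarrow> lat_act g L \<in> Xd"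
  by (auto simp: Xd_def lat_act_lat_of det_one_in_unimod_mats unimod_mats_mult)

lemma seminorm_continuous:
  fixes N :: "'a::euclidean_space \<Rightarrow> real"
  assumes hom: "\<And>c x. N (c *\<^sub>R x) = \<bar>c\<bar> * N x" and subadd: "\<And>x y. N (x + y) \<le> N x + N y"
  shows "continuous_on UNIV N"
proof (rule convex_on_continuous)
  show "convex_on UNIV N"
  proof (rule convex_onI)
    fix t :: real and x y assume "0 < t" "t < 1"
    then show "N ((1 - t) *\<^sub>R x + t *\<^sub>R y) \<le> (1 - t) * N x + t * N y"
      using subadd[of "(1 - t) *\<^sub>R x" "t *\<^sub>R y"] by (simp add: hom)
  qed simp
qed simp

lemma block_norm_continuous: "is_block_norm blk b N \<Longrightarrow> continuous_on UNIV N"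
  unfolding is_block_norm_def by (intro seminorm_continuous) auto

lemma block_norm_amat:
  assumes "is_block_norm blk b N"
  shows "N (amat k r blk t *v v) = exp (aexp k r blk t b) * N v"
proof -
  have "blockproj blk b (amat k r blk t *v v) = exp (aexp k r blk t b) *\<^sub>R blockproj blk b v"
    by (simp add: blockproj_def amat_mult_vec vec_eq_iff)
  with assms show ?thesis
    unfolding is_block_norm_def by (metis abs_of_pos exp_gt_zero)
qed

lemma continuous_on_matrix_mult_const_right: "continuous_on S (\<lambda>h::real^'n^'m. h ** (c::real^'p^'n))"
  unfolding matrix_matrix_mult_def by (intro continuous_on_vec_lambda continuous_intros)

lemma continuous_on_const_matrix_mult: "continuous_on S (\<lambda>h::real^'p^'n. (c::real^'n^'m) ** h)"
  unfolding matrix_matrix_mult_def by (intro continuous_on_vec_lambda continuous_intros)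

lemma continuous_on_matrix_vector_mult_const: "continuous_on S (\<lambda>g::real^'n^'m. g *v z)"
  unfolding matrix_vector_mult_def by (intro continuous_on_vec_lambda continuous_intros)

lemma closed_unimod_mats: "closed (unimod_mats :: (real^'n^'n) set)"
proof -
  have "continuous_on UNIV (\<lambda>g::real^'n^'n. \<bar>det g\<bar>)"
    unfolding det_def by (intro continuous_intros)
  then have "closed ((\<lambda>g::real^'n^'n. \<bar>det g\<bar>) -` {1})"
    by (simp add: continuous_closed_vimage continuous_on_eq_continuous_within)
  then show ?thesis by (simp add: unimod_mats_def vimage_def)
qed

lemma openin_Xd_top:
  fixes U :: "(real^'d::finite) set set"
  shows "openin Xd_top U \<longleftrightarrow> U \<subseteq> Xd \<and> openin (top_of_set unimod_mats) {g \<in> unimod_mats. lat_of g \<in> U}"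
proof -
  have "istopology (\<lambda>U::(real^'d) set set. U \<subseteq> Xd \<and> openin (top_of_set unimod_mats) {g \<in> unimod_mats. lat_of g \<in> U})"
    unfolding istopology_def
  proof (rule conjI; intro allI impI)
    fix S T :: "(real^'d) set set"
    assume "S \<subseteq> Xd \<and> openin (top_of_set unimod_mats) {g \<in> unimod_mats. lat_of g \<in> S}"
      and "T \<subseteq> Xd \<and> openin (top_of_set unimod_mats) {g \<in> unimod_mats. lat_of g \<in> T}"
    then have "openin (top_of_set unimod_mats)
        ({g \<in> unimod_mats. lat_of g \<in> S} \<inter> {g \<in> unimod_mats. lat_of g \<in> T})" and "S \<subseteq> Xd"
      by auto
    moreover have "{g \<in> unimod_mats. lat_of g \<in> S} \<inter> {g \<in> unimod_mats. lat_of g \<in> T}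
        = {g \<in> unimod_mats. lat_of g \<in> S \<inter> T}" by blast
    ultimately show "S \<inter> T \<subseteq> Xd \<and> openin (top_of_set unimod_mats) {g \<in> unimod_mats. lat_of g \<in> S \<inter> T}"
      by auto
  next
    fix K :: "(real^'d) set set set"
    assume K: "\<forall>S\<in>K. S \<subseteq> Xd \<and> openin (top_of_set unimod_mats) {g \<in> unimod_mats. lat_of g \<in> S}"
    then have "openin (top_of_set unimod_mats) (\<Union>S\<in>K. {g \<in> unimod_mats. lat_of g \<in> S})"
      by (intro openin_Union) auto
    moreover have "(\<Union>S\<in>K. {g \<in> unimod_mats. lat_of g \<in> S}) = {g \<in> unimod_mats. lat_of g \<in> \<Union>K}"
      by blast
    ultimately show "\<Union>K \<subseteq> Xd \<and> openin (top_of_set unimod_mats) {g \<in> unimod_mats. lat_of g \<in> \<Union>K}"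
      using K by auto
  qed
  then show ?thesis
    unfolding Xd_top_def by (simp add: topology_inverse')
qed

lemma space_Xd_borel: "space Xd_borel = Xd"
  unfolding Xd_borel_def by (rule space_measure_of) (auto simp: openin_Xd_top)

lemma sets_Xd_borel: "sets Xd_borel = sigma_sets Xd {U. openin Xd_top U}"
  unfolding Xd_borel_def by (rule sets_measure_of) (auto simp: openin_Xd_top)

lemma vimage_lat_of_borel:
  fixes A :: "(real^'d::finite) set set"
  assumes "A \<in> sets Xd_borel"
  shows "{g \<in> unimod_mats. lat_of g \<in> A} \<in> sets borel"
proof -
  have unimod: "unimod_mats \<in> sets (borel :: (real^'d^'d) measure)"
    by (rule borel_closed[OF closed_unimod_mats])
  have "A \<in> sigma_sets Xd {U. openin Xd_top U}" using assms by (simp add: sets_Xd_borel)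
  then show ?thesis
  proof induct
    case (Basic U)
    then obtain W where "open W" "{g \<in> unimod_mats. lat_of g \<in> U} = unimod_mats \<inter> W"
      by (auto simp: openin_Xd_top openin_open)
    then show ?case using unimod by auto
  next
    case (Compl U)
    have "{g \<in> unimod_mats. lat_of g \<in> Xd - U} = unimod_mats - {g \<in> unimod_mats. lat_of g \<in> U}"
      using lat_of_in_Xd by blast
    then show ?case using Compl unimod by auto
  next
    case (Union U)
    have "{g \<in> unimod_mats. lat_of g \<in> \<Union> (range U)} = (\<Union>i. {g \<in> unimod_mats. lat_of g \<in> U i})"
      by blast
    then show ?case using Union by auto
  qed simp
qed

lemma lat_act_measurable:
  fixes a :: "real^'d^'d::finite"
  assumes "det a = 1"
  shows "lat_act a \<in> Xd_borel \<rightarrow>\<^sub>M Xd_borel"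
proof (rule measurable_sigma_sets[OF sets_Xd_borel])
  show "{U. openin Xd_top U} \<subseteq> Pow Xd" by (auto simp: openin_Xd_top)
  show "lat_act a \<in> space Xd_borel \<rightarrow> Xd" using lat_act_in_Xd[OF assms] by (auto simp: space_Xd_borel)
  fix U :: "(real^'d) set set" assume "U \<in> {U. openin Xd_top U}"
  then have U: "openin (top_of_set unimod_mats) {g \<in> unimod_mats. lat_of g \<in> U}"
    by (simp add: openin_Xd_top)
  have "openin (top_of_set unimod_mats) (unimod_mats \<inter> (\<lambda>g. a ** g) -` {g \<in> unimod_mats. lat_of g \<in> U})"
    by (rule continuous_openin_preimage[OF continuous_on_const_matrix_mult _ U])
      (auto simp: assms det_one_in_unimod_mats unimod_mats_mult)
  moreover have "unimod_mats \<inter> (\<lambda>g. a ** g) -` {g \<in> unimod_mats. lat_of g \<in> U}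
      = {g \<in> unimod_mats. lat_of g \<in> lat_act a -` U \<inter> space Xd_borel}"
    by (auto simp: space_Xd_borel lat_act_lat_of lat_of_in_Xd assms det_one_in_unimod_mats unimod_mats_mult)
  ultimately show "lat_act a -` U \<inter> space Xd_borel \<in> sets Xd_borel"
    by (simp add: openin_Xd_top space_Xd_borel sets_Xd_borel)
qed

section \<open>The quotient Borel structure of \<open>X\<^sub>d\<close>\<close>

lemma intvecs_diff: "z \<in> intvecs \<Longrightarrow> w \<in> intvecs \<Longrightarrow> z - w \<in> intvecs"
  by (simp add: intvecs_def Ints_diff)

lemma axis_in_intvecs: "axis j 1 \<in> intvecs"
  by (simp add: intvecs_def axis_def)

lemma countable_intvecs: "countable intvecs"
  unfolding intvecs_def by (rule countable_vector[OF countable_int])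

lemma norm_ge_1_if_intvecs:
  assumes "z \<in> intvecs" "z \<noteq> 0"
  shows "1 \<le> norm z"
proof -
  obtain i where "z $ i \<noteq> 0" using assms(2) by (auto simp: vec_eq_iff)
  moreover have "z $ i \<in> \<int>" using assms(1) by (simp add: intvecs_def)
  ultimately have "1 \<le> \<bar>z $ i\<bar>" by (rule Ints_nonzero_abs_ge1[rotated])
  also have "\<dots> \<le> norm z" by (rule component_le_norm_cart)
  finally show ?thesis .
qed

lemma integer_matrix_vector_mult_in_intvecs:
  "(\<forall>i j. c $ i $ j \<in> \<int>) \<Longrightarrow> z \<in> intvecs \<Longrightarrow> c *v z \<in> intvecs"
  unfolding intvecs_def matrix_vector_mult_def by (auto intro!: Ints_sum Ints_mult)

lemma matrix_vector_mult_axis: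
  fixes g :: "real^'n^'m"
  shows "(g *v axis j 1) $ i = g $ i $ j"
  by (simp add: matrix_vector_mult_basis column_def)

lemma lat_of_eq_imp_integer_change_of_basis:
  fixes g h :: "real^'n^'n"
  assumes "lat_of g = lat_of h"
  obtains c where "\<forall>i j. c $ i $ j \<in> \<int>" "g = h ** c"
proof -
  have "\<forall>j. \<exists>w \<in> intvecs. g *v axis j 1 = h *v w"
    using assms axis_in_intvecs unfolding lat_of_def by (metis image_eqI image_iff)
  then obtain w where w: "\<And>j. w j \<in> intvecs" "\<And>j. g *v axis j 1 = h *v w j" by metis
  have "(h ** (\<chi> i j. w j $ i)) $ i $ j = (h *v w j) $ i" for i j
    by (simp add: matrix_matrix_mult_def matrix_vector_mult_def)
  then have "g = h ** (\<chi> i j. w j $ i)"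
    by (simp add: vec_eq_iff flip: w(2) matrix_vector_mult_axis)
  moreover have "\<forall>i j. (\<chi> i j. w j $ i) $ i $ j \<in> \<int>"
    using w(1) by (simp add: intvecs_def)
  ultimately show ?thesis using that by blast
qed

lemma lat_of_mult_integer_unimodular:
  assumes "\<forall>i j. c $ i $ j \<in> \<int>" "\<forall>i j. c' $ i $ j \<in> \<int>" "c ** c' = mat 1"
  shows "lat_of (h ** c) = lat_of h"
proof
  show "lat_of (h ** c) \<subseteq> lat_of h"
    using integer_matrix_vector_mult_in_intvecs[OF assms(1)]
    by (auto simp: lat_of_def matrix_vector_mul_assoc[symmetric])
  have "h *v y = (h ** c) *v (c' *v y)" for y
    by (metis assms(3) matrix_mul_assoc matrix_mul_rid matrix_vector_mul_assoc)
  then show "lat_of h \<subseteq> lat_of (h ** c)"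
    using integer_matrix_vector_mult_in_intvecs[OF assms(2)] by (auto simp: lat_of_def)
qed

lemma openin_Xd_top_image_lat_of:
  fixes W :: "(real^'d^'d::finite) set"
  assumes W: "openin (top_of_set unimod_mats) W"
  shows "openin Xd_top (lat_of ` W)"
proof -
  have WG: "W \<subseteq> unimod_mats" using openin_imp_subset[OF W] by simp
  have "openin (top_of_set unimod_mats) {h \<in> unimod_mats. lat_of h \<in> lat_of ` W}"
  proof (subst openin_subopen, intro ballI)
    fix h assume "h \<in> {h \<in> unimod_mats. lat_of h \<in> lat_of ` W}"
    then obtain g where h: "h \<in> unimod_mats" and g: "g \<in> W" and eq: "lat_of h = lat_of g" by blast
    obtain c where c: "\<forall>i j. c $ i $ j \<in> \<int>" "g = h ** c"
      using lat_of_eq_imp_integer_change_of_basis[OF eq[symmetric]] .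
    obtain c' where c': "\<forall>i j. c' $ i $ j \<in> \<int>" "h = g ** c'"
      using lat_of_eq_imp_integer_change_of_basis[OF eq] .
    have "invertible h" using h by (simp add: unimod_mats_def invertible_det_nz)
    then have cc': "c ** c' = mat 1"
      using c(2) c'(2) by (metis invertible_left_inverse matrix_mul_assoc matrix_mul_lid)
    have detc: "c \<in> unimod_mats"
      using h WG g c(2) by (auto simp: unimod_mats_def det_mul abs_mult)
    define T where "T = unimod_mats \<inter> (\<lambda>h'. h' ** c) -` W"
    have "openin (top_of_set unimod_mats) T"
      unfolding T_def using W detc
      by (intro continuous_openin_preimage[OF continuous_on_matrix_mult_const_right]) (auto intro: unimod_mats_mult)
    moreover have "T \<subseteq> {h \<in> unimod_mats. lat_of h \<in> lat_of ` W}"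
    proof
      fix h' assume "h' \<in> T"
      then have "h' \<in> unimod_mats" "lat_of h' = lat_of (h' ** c)" "h' ** c \<in> W"
        using lat_of_mult_integer_unimodular[OF c(1) c'(1) cc'] by (auto simp: T_def)
      then show "h' \<in> {h \<in> unimod_mats. lat_of h \<in> lat_of ` W}" by auto
    qed
    moreover have "h \<in> T" using h g c(2) by (simp add: T_def)
    ultimately show "\<exists>T. openin (top_of_set unimod_mats) T \<and> h \<in> T \<and> T \<subseteq> {h \<in> unimod_mats. lat_of h \<in> lat_of ` W}"
      by blast
  qed
  moreover have "lat_of ` W \<subseteq> Xd" using WG lat_of_in_Xd by blast
  ultimately show ?thesis by (simp add: openin_Xd_top)
qed

lemma norm_matrix_vector_mult_le:
  fixes A :: "real^'n^'m"
  shows "norm (A *v x) \<le> real CARD('m) * real CARD('n) * norm A * norm x"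
proof -
  have "\<bar>A $ i $ j\<bar> \<le> norm A" for i j
    using component_le_norm_cart[of "A $ i" j] Finite_Cartesian_Product.norm_nth_le[of A i] by linarith
  then have "onorm ((*v) A) \<le> real CARD('m) * real CARD('n) * norm A"
    by (rule onorm_le_matrix_component)
  then show ?thesis
    using onorm[OF matrix_vector_mul_bounded_linear, of A x] by (meson mult_right_mono norm_ge_zero order_trans)
qed

lemma matrix_vector_mult_bounded_below_near:
  fixes g0 :: "real^'n^'n"
  assumes "invertible g0"
  obtains \<delta> K where "\<delta> > 0" "K > 0" "\<And>g x. dist g0 g < \<delta> \<Longrightarrow> norm x \<le> K * norm (g *v x)"
proof -
  obtain M where M: "M ** g0 = mat 1" using assms invertible_def by blast
  define C where "C = real CARD('n) * real CARD('n)"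
  have "1 \<le> real CARD('n)" by (simp add: Suc_leI)
  from mult_mono[OF this this] have C: "C \<ge> 1" by (simp add: C_def)
  define K where "K = C * norm M + 1"
  have K: "K > 0" using C unfolding K_def by (simp add: add_nonneg_pos)
  define \<delta> where "\<delta> = 1 / (2 * C * K)"
  have \<delta>: "\<delta> > 0" using C K by (simp add: \<delta>_def)
  have "norm x \<le> 2 * K * norm (g *v x)" if "dist g0 g < \<delta>" for g x
  proof -
    have "C * norm (g0 - g) * norm x \<le> C * \<delta> * norm x"
      using that C by (intro mult_right_mono mult_left_mono) (auto simp: dist_norm)
    then have "norm ((g0 - g) *v x) \<le> C * \<delta> * norm x"
      using norm_matrix_vector_mult_le[of "g0 - g" x] unfolding C_def by linarith
    then have small: "norm (g *v x + (g0 - g) *v x) \<le> norm (g *v x) + C * \<delta> * norm x"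
      using norm_triangle_ineq[of "g *v x" "(g0 - g) *v x"] by linarith
    have "norm x = norm (M *v (g *v x + (g0 - g) *v x))"
      by (simp add: matrix_vector_mult_diff_rdistrib matrix_vector_mul_assoc M)
    also have "\<dots> \<le> C * norm M * norm (g *v x + (g0 - g) *v x)"
      using norm_matrix_vector_mult_le by (simp add: C_def)
    also have "\<dots> \<le> K * (norm (g *v x) + C * \<delta> * norm x)"
      using small K by (intro mult_mono) (auto simp: K_def)
    also have "\<dots> = K * norm (g *v x) + (K * (C * \<delta>)) * norm x"
      by (simp add: algebra_simps)
    also have "K * (C * \<delta>) = 1 / 2"
      using C K by (simp add: \<delta>_def)
    finally show ?thesis by linarith
  qed
  moreover have "2 * K > 0" using K by simp
  ultimately show ?thesis using that \<delta> by blast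
qed

text \<open>Each column of \<open>g'\<close> is \<open>g w\<close> for an integer vector \<open>w\<close>; the lower bound for \<open>g\<close>
  forces \<open>w\<close> to be the corresponding unit vector.\<close>
lemma lat_of_eq_imp_eq_if_close:
  fixes g g' :: "real^'d^'d::finite"
  assumes below: "\<And>x. norm x \<le> K * norm (g *v x)"
    and close: "K * (real CARD('d) * real CARD('d) * norm (g' - g)) < 1"
    and eq: "lat_of g = lat_of g'"
  shows "g = g'"
proof (rule ccontr)
  assume "g \<noteq> g'"
  then obtain j where j: "g *v axis j 1 \<noteq> g' *v axis j 1"
    by (metis matrix_vector_mult_axis vec_eq_iff)
  have "g' *v axis j 1 \<in> lat_of g'" unfolding lat_of_def using axis_in_intvecs by (rule imageI)
  then have "g' *v axis j 1 \<in> lat_of g" by (simp add: eq)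
  then obtain w where w: "w \<in> intvecs" "g' *v axis j 1 = g *v w" unfolding lat_of_def by blast
  define z where "z = w - axis j 1"
  have gz: "g *v z = (g' - g) *v axis j 1"
    by (simp add: z_def matrix_vector_mult_diff_distrib matrix_vector_mult_diff_rdistrib w(2))
  have "z \<in> intvecs" unfolding z_def by (rule intvecs_diff[OF w(1) axis_in_intvecs])
  moreover have "z \<noteq> 0" using gz j by (auto simp: matrix_vector_mult_diff_rdistrib)
  ultimately have "1 \<le> norm z" by (rule norm_ge_1_if_intvecs)
  also have "\<dots> \<le> K * norm ((g' - g) *v axis j 1)"
    using below[of z] by (simp add: gz)
  finally have one: "1 \<le> K * norm ((g' - g) *v axis j 1)" .
  then have "0 < K * norm ((g' - g) *v axis j 1)" by linarith
  then have "K > 0" by (auto simp: zero_less_mult_iff)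
  then have "K * norm ((g' - g) *v axis j 1) \<le> K * (real CARD('d) * real CARD('d) * norm (g' - g))"
    using norm_matrix_vector_mult_le[of "g' - g" "axis j 1"] by (simp add: mult_left_mono)
  then show False using one close by simp
qed

lemma lat_of_locally_injective:
  fixes g0 :: "real^'d^'d::finite"
  assumes "g0 \<in> unimod_mats"
  obtains V where "openin (top_of_set unimod_mats) V" "g0 \<in> V" "inj_on lat_of V"
proof -
  have "invertible g0" using assms by (simp add: unimod_mats_def invertible_det_nz)
  then obtain \<delta> K where \<delta>: "\<delta> > 0" and K: "K > 0"
    and below: "\<And>g x. dist g0 g < \<delta> \<Longrightarrow> norm x \<le> K * norm (g *v x)"
    by (rule matrix_vector_mult_bounded_below_near) blast
  define C where "C = real CARD('d) * real CARD('d)"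
  have "C > 0" by (simp add: C_def)
  define \<rho> where "\<rho> = min \<delta> (1 / (2 * C * K))"
  have \<rho>: "\<rho> > 0" "\<rho> \<le> \<delta>" "\<rho> * (2 * C * K) \<le> 1"
    using \<delta> \<open>C > 0\<close> K by (auto simp: \<rho>_def min_le_iff_disj simp flip: pos_le_divide_eq)
  have "g = g'" if g: "dist g0 g < \<rho>" and g': "dist g0 g' < \<rho>" and eq: "lat_of g = lat_of g'" for g g'
  proof (rule lat_of_eq_imp_eq_if_close[where K = K, OF _ _ eq])
    show "norm x \<le> K * norm (g *v x)" for x using below g \<rho>(2) by simp
    have "norm (g' - g) < 2 * \<rho>"
      using dist_triangle3[of g' g g0] g g' by (simp add: dist_norm)
    then have "K * (C * norm (g' - g)) < K * (C * (2 * \<rho>))"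
      using K \<open>C > 0\<close> by simp
    also have "\<dots> \<le> 1" using \<rho>(3) by (simp add: algebra_simps)
    finally show "K * (real CARD('d) * real CARD('d) * norm (g' - g)) < 1"
      by (simp add: C_def)
  qed
  then have "inj_on lat_of (unimod_mats \<inter> ball g0 \<rho>)"
    by (auto simp: inj_on_def)
  moreover have "openin (top_of_set unimod_mats) (unimod_mats \<inter> ball g0 \<rho>)"
    by (simp add: openin_open_Int)
  moreover have "g0 \<in> unimod_mats \<inter> ball g0 \<rho>" using assms \<rho> by simp
  ultimately show ?thesis using that by blast
qed

lemma image_lat_of_in_Xd_borel:
  fixes V :: "(real^'d^'d::finite) set"
  assumes V: "openin (top_of_set unimod_mats) V" and inj: "inj_on lat_of V"
    and B: "B \<in> sets borel"
  shows "lat_of ` (V \<inter> B) \<in> sets Xd_borel"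
proof -
  have "B \<in> sigma_sets UNIV {S. open S}" using B by (simp add: sets_borel)
  then show ?thesis
  proof induct
    case (Basic S)
    have "openin (top_of_set unimod_mats) (V \<inter> S)"
      using V Basic by (auto intro: openin_Int_open)
    then show ?case by (simp add: openin_Xd_top_image_lat_of sets_Xd_borel)
  next
    case (Compl S)
    have "lat_of ` (V \<inter> (UNIV - S)) = lat_of ` (V \<inter> UNIV) - lat_of ` (V \<inter> S)"
      using inj by (auto simp: inj_on_def)
    moreover have "lat_of ` (V \<inter> UNIV) \<in> sets Xd_borel"
      using V by (simp add: openin_Xd_top_image_lat_of sets_Xd_borel)
    ultimately show ?case using Compl by auto
  next
    case (Union S)
    have "lat_of ` (V \<inter> \<Union> (range S)) = (\<Union>i. lat_of ` (V \<inter> S i))" by blast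
    then show ?case using Union by auto
  qed simp
qed

text \<open>Cover the matrix group by countably many relatively open sets on which \<open>g \<mapsto> g \<int>\<^sup>d\<close> is
  injective (Lindelof); on each of them images of Borel sets are Borel.\<close>
lemma in_Xd_borel_if_vimage_lat_of_borel:
  fixes A :: "(real^'d::finite) set set"
  assumes AX: "A \<subseteq> Xd" and P: "{g \<in> unimod_mats. lat_of g \<in> A} \<in> sets borel"
  shows "A \<in> sets Xd_borel"
proof -
  define \<F> where "\<F> = {V. openin (top_of_set (unimod_mats :: (real^'d^'d) set)) V \<and> inj_on lat_of V}"
  obtain \<F>' where \<F>': "\<F>' \<subseteq> \<F>" "countable \<F>'" "\<Union>\<F>' = \<Union>\<F>"
    using Lindelof_openin[of \<F> unimod_mats] unfolding \<F>_def by blast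
  have cover: "\<Union>\<F> = unimod_mats"
    by (auto simp: \<F>_def dest: openin_imp_subset elim!: lat_of_locally_injective)
  have "A \<subseteq> (\<Union>V\<in>\<F>'. lat_of ` (V \<inter> {g \<in> unimod_mats. lat_of g \<in> A}))"
  proof
    fix L assume "L \<in> A"
    then obtain g where "g \<in> unimod_mats" "L = lat_of g" "lat_of g \<in> A"
      using AX by (auto simp: Xd_def)
    moreover obtain V where "V \<in> \<F>'" "g \<in> V"
      using \<open>g \<in> unimod_mats\<close> \<F>'(3) cover by blast
    ultimately show "L \<in> (\<Union>V\<in>\<F>'. lat_of ` (V \<inter> {g \<in> unimod_mats. lat_of g \<in> A}))"
      by blast
  qed
  then have "A = (\<Union>V\<in>\<F>'. lat_of ` (V \<inter> {g \<in> unimod_mats. lat_of g \<in> A}))"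
    by blast
  also have "\<dots> \<in> sets Xd_borel"
    using \<F>' P unfolding \<F>_def by (intro sets.countable_UN') (auto intro: image_lat_of_in_Xd_borel)
  finally show ?thesis .
qed

section \<open>Flow sets are Borel\<close>

text \<open>For \<open>v \<in> L\<^sub>\<epsilon>\<close> the first \<open>k + r - 1\<close> blocks of \<open>v\<close> have norm one, so the block norms of
  \<open>w = a\<^sub>t v\<close> are \<open>exp (\<plusminus>t b)\<close> and the flow time \<open>t\<close> can be read off \<open>w\<close>.\<close>
definition flow_time :: "nat \<Rightarrow> nat \<Rightarrow> (nat \<Rightarrow> real^'d \<Rightarrow> real) \<Rightarrow> real^'d \<Rightarrow> nat \<Rightarrow> real" where
  "flow_time k r N w c = (if k + r - 1 \<le> c then 0 else if c < k then ln (N c w) else - ln (N c w))"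

lemma flow_time_amat:
  assumes norms: "\<forall>b < k + r - 1. is_block_norm blk b (N b)"
    and unit: "\<forall>b < k + r - 1. N b v = 1" and t: "\<forall>c \<ge> k + r - 1. t c = 0"
  shows "flow_time k r N (amat k r blk t *v v) = t"
proof
  fix c
  show "flow_time k r N (amat k r blk t *v v) c = t c"
  proof (cases "c < k + r - 1")
    case True
    then show ?thesis
      using norms unit by (auto simp: flow_time_def block_norm_amat aexp_def)
  qed (use t in \<open>simp add: flow_time_def\<close>)
qed

lemma lat_of_in_flowset_iff:
  fixes g :: "real^'d^'d::finite" and N :: "nat \<Rightarrow> real^'d \<Rightarrow> real"
  assumes norms: "\<forall>b < k + r - 1. is_block_norm blk b (N b)"
    and E: "E \<subseteq> Seps k r blk N \<epsilon>"
  shows "lat_of g \<in> flowset k r blk (Itau k r \<tau>) E \<longleftrightarrow>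
    (\<exists>z\<in>intvecs. (\<forall>b<k+r-1. N b (g *v z) > 0) \<and> flow_time k r N (g *v z) \<in> Itau k r \<tau> \<and>
        lat_of (amat k r blk (\<lambda>c. - flow_time k r N (g *v z) c) ** g) \<in> E)"
    (is "_ \<longleftrightarrow> (\<exists>z\<in>intvecs. ?P z)")
proof
  assume "lat_of g \<in> flowset k r blk (Itau k r \<tau>) E"
  then obtain t L where t: "t \<in> Itau k r \<tau>" and L: "L \<in> E" and gL: "lat_of g = lat_act (amat k r blk t) L"
    unfolding flowset_def by blast
  define h where "h = amat k r blk (\<lambda>c. - t c) ** g"
  have hL: "lat_of h = L"
    by (simp add: h_def gL lat_act_lat_act amat_inverse flip: lat_act_lat_of) (simp add: lat_act_def)
  obtain v where v: "v \<in> L" "\<forall>b < k + r - 1. N b v = 1"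
    using L E unfolding Seps_def Leps_def primitive_in_def by blast
  obtain z where z: "z \<in> intvecs" "v = h *v z" using v(1) hL unfolding lat_of_def by blast
  have gz: "g *v z = amat k r blk t *v v"
    by (simp add: z(2) h_def matrix_vector_mul_assoc matrix_mul_assoc amat_inverse)
  have time: "flow_time k r N (g *v z) = t"
    unfolding gz using norms v(2) t by (intro flow_time_amat) (auto simp: Itau_def)
  have "N b (g *v z) > 0" if "b < k + r - 1" for b
    using norms v(2) that block_norm_amat[of blk b "N b" k r t v] by (simp add: gz)
  then have "?P z" using t L hL by (simp add: time h_def)
  with z(1) show "\<exists>z\<in>intvecs. ?P z" by blast
next
  assume "\<exists>z\<in>intvecs. ?P z"
  then obtain t where "t \<in> Itau k r \<tau>" "lat_of (amat k r blk (\<lambda>c. - t c) ** g) \<in> E" by blast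
  moreover have "lat_of g = lat_act (amat k r blk t) (lat_of (amat k r blk (\<lambda>c. - t c) ** g))"
    by (simp add: lat_act_lat_of matrix_mul_assoc amat_inverse)
  ultimately show "lat_of g \<in> flowset k r blk (Itau k r \<tau>) E"
    unfolding flowset_def by blast
qed

lemma sets_borel_Collect_continuous_on_open:
  fixes f :: "'a::topological_space \<Rightarrow> 'b::topological_space"
  assumes "open S" "continuous_on S f" "B \<in> sets borel"
  shows "{x \<in> S. f x \<in> B} \<in> sets borel"
proof -
  have "f -` B \<inter> space (restrict_space borel S) \<in> sets (restrict_space borel S)"
    by (rule measurable_sets[OF borel_measurable_continuous_on_restrict[OF assms(2)] assms(3)])
  moreover have "f -` B \<inter> space (restrict_space borel S) = {x \<in> S. f x \<in> B}"
    by (auto simp: space_restrict_space)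
  ultimately show ?thesis
    using assms(1) by (simp add: sets_restrict_space_iff)
qed

lemma continuous_on_aexp:
  assumes "\<And>c. continuous_on S (\<lambda>x. t x c)"
  shows "continuous_on S (\<lambda>x. aexp k r blk (t x) b)"
  unfolding aexp_def by (cases "b < k"; cases "b < k + r - 1"; simp add: divide_inverse; intro continuous_intros assms)

context
  fixes k r :: nat and blk :: "'d::finite \<Rightarrow> nat" and N :: "nat \<Rightarrow> real^'d \<Rightarrow> real" and z :: "real^'d"
  assumes norms: "\<forall>b < k + r - 1. is_block_norm blk b (N b)"
begin

lemma open_block_norms_pos: "open {g::real^'d^'d. \<forall>b<k+r-1. N b (g *v z) > 0}"
proof -
  have "open {g::real^'d^'d. N b (g *v z) > 0}" if "b < k + r - 1" for b
  proof -
    have "continuous_on UNIV (N b)" using norms that block_norm_continuous by blast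
    then have "continuous_on UNIV (\<lambda>g::real^'d^'d. N b (g *v z))"
      by (rule continuous_on_compose2[OF _ continuous_on_matrix_vector_mult_const]) simp
    then show ?thesis by (intro open_Collect_less continuous_on_const) simp_all
  qed
  then have "open (\<Inter>b<k+r-1. {g::real^'d^'d. N b (g *v z) > 0})" by auto
  moreover have "(\<Inter>b<k+r-1. {g::real^'d^'d. N b (g *v z) > 0}) = {g. \<forall>b<k+r-1. N b (g *v z) > 0}"
    by blast
  ultimately show ?thesis by simp
qed

lemma continuous_on_flow_time:
  "continuous_on {g. \<forall>b<k+r-1. N b (g *v z) > 0} (\<lambda>g. flow_time k r N (g *v z) c)"
proof (cases "k + r - 1 \<le> c")
  case False
  then have "c < k + r - 1" by simp
  then have "continuous_on UNIV (N c)" using norms block_norm_continuous by blast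
  then have "continuous_on {g. \<forall>b<k+r-1. N b (g *v z) > 0} (\<lambda>g. N c (g *v z))"
    by (rule continuous_on_compose2[OF _ continuous_on_matrix_vector_mult_const]) simp
  then have "continuous_on {g. \<forall>b<k+r-1. N b (g *v z) > 0} (\<lambda>g. ln (N c (g *v z)))"
    by (rule continuous_on_ln) (use \<open>c < k + r - 1\<close> in fastforce)
  then show ?thesis
    unfolding flow_time_def using False by (cases "c < k") (auto intro: continuous_on_minus)
qed (simp add: flow_time_def)

lemma continuous_on_flow_back:
  "continuous_on {g. \<forall>b<k+r-1. N b (g *v z) > 0}
     (\<lambda>g. amat k r blk (\<lambda>c. - flow_time k r N (g *v z) c) ** g)"
  unfolding amat_mult_mat
  by (intro continuous_on_vec_lambda continuous_intros continuous_on_aexp continuous_on_flow_time)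

end

lemma vimage_lat_of_flowset_borel:
  fixes N :: "nat \<Rightarrow> real^'d::finite \<Rightarrow> real"
  assumes r: "r \<ge> 1" and blk: "\<forall>i. blk i < k + r" and last_block: "blocksize blk (k + r - 1) > 0"
    and norms: "\<forall>b < k + r - 1. is_block_norm blk b (N b)"
    and E: "E \<subseteq> Seps k r blk N \<epsilon>" and Em: "E \<in> sets Xd_borel"
  shows "{g \<in> unimod_mats. lat_of g \<in> flowset k r blk (Itau k r \<tau>) E} \<in> sets borel"
proof -
  define U where "U z = {g::real^'d^'d. \<forall>b<k+r-1. N b (g *v z) > 0}" for z
  define C where "C z = unimod_mats \<inter>
      {g \<in> U z. amat k r blk (\<lambda>c. - flow_time k r N (g *v z) c) ** g \<in> {h \<in> unimod_mats. lat_of h \<in> E}} \<inter>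
      (\<Inter>c<k+r-1. {g \<in> U z. flow_time k r N (g *v z) c \<in> {0..\<tau>}})" for z
  have C_borel: "C z \<in> sets borel" for z
  proof -
    have "open (U z)" unfolding U_def by (rule open_block_norms_pos[OF norms])
    moreover note continuous_on_flow_back[OF norms, of z] continuous_on_flow_time[OF norms, of z]
    ultimately show ?thesis
      unfolding C_def U_def using borel_closed[OF closed_unimod_mats] vimage_lat_of_borel[OF Em]
      by (intro sets.Int sets.countable_INT'' sets_borel_Collect_continuous_on_open) auto
  qed
  have "{g \<in> unimod_mats. lat_of g \<in> flowset k r blk (Itau k r \<tau>) E} = (\<Union>z\<in>intvecs. C z)"
  proof -
    have "flow_time k r N w \<in> Itau k r \<tau> \<longleftrightarrow> (\<forall>c<k+r-1. flow_time k r N w c \<in> {0..\<tau>})" for w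
      by (auto simp: Itau_def flow_time_def)
    moreover have "amat k r blk t ** g \<in> unimod_mats" if "g \<in> unimod_mats" for t and g :: "real^'d^'d"
      using that det_amat[OF r blk last_block] by (simp add: det_one_in_unimod_mats unimod_mats_mult)
    ultimately show ?thesis
      unfolding lat_of_in_flowset_iff[OF norms E] C_def U_def by auto
  qed
  also have "\<dots> \<in> sets borel"
    using C_borel by (intro sets.countable_UN' countable_intvecs) auto
  finally show ?thesis .
qed

section \<open>Scaling of flow sets\<close>

lemma interval_covered_by_translates:
  fixes x \<tau> :: real
  assumes "n \<ge> 1" "\<tau> > 0" "0 \<le> x" "x \<le> real n * \<tau>"
  obtains j where "j < n" "0 \<le> x - real j * \<tau>" "x - real j * \<tau> \<le> \<tau>"
proof (cases "\<lfloor>x / \<tau>\<rfloor> < int n")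
  case True
  define j where "j = nat \<lfloor>x / \<tau>\<rfloor>"
  have "real j \<le> x / \<tau>" "x / \<tau> < real j + 1"
    using assms(2,3) by (simp_all add: j_def)
  then have "real j * \<tau> \<le> x" "x \<le> (real j + 1) * \<tau>"
    using assms(2) by (simp_all add: field_simps)
  moreover have "int j = \<lfloor>x / \<tau>\<rfloor>" using assms(2,3) by (simp add: j_def)
  then have "j < n" using True by linarith
  ultimately show ?thesis using that by (simp add: algebra_simps)
next
  case False
  then have "real n \<le> x / \<tau>" by linarith
  then have "x = real n * \<tau>" using assms(2,4) by (simp add: field_simps)
  then show ?thesis using that[of "n - 1"] assms(1,2) by (simp add: of_nat_diff algebra_simps)
qed

lemma Itau_mono: "\<tau> \<le> \<tau>' \<Longrightarrow> Itau k r \<tau> \<subseteq> Itau k r \<tau>'"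
  by (auto simp: Itau_def)

definition index_grid :: "nat \<Rightarrow> nat \<Rightarrow> (nat \<Rightarrow> nat) set" where
  "index_grid D n = (\<lambda>f i. if i < D then f i else 0) ` PiE {..<D} (\<lambda>_. {..<n})"

lemma finite_index_grid: "finite (index_grid D n)"
  unfolding index_grid_def by (intro finite_imageI finite_PiE) auto

lemma card_index_grid_le: "card (index_grid D n) \<le> n ^ D"
  unfolding index_grid_def by (rule order_trans[OF card_image_le]) (auto simp: card_PiE finite_PiE)

lemma Itau_covered_by_translates:
  assumes "n \<ge> 1" "\<tau> > 0" "t \<in> Itau k r (real n * \<tau>)"
  obtains j where "j \<in> index_grid (k + r - 1) n" "(\<lambda>i. t i - real (j i) * \<tau>) \<in> Itau k r \<tau>"
proof -
  have "\<forall>i\<in>{..<k+r-1}. \<exists>j. j < n \<and> 0 \<le> t i - real j * \<tau> \<and> t i - real j * \<tau> \<le> \<tau>"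
  proof
    fix i assume "i \<in> {..<k+r-1}"
    then have "0 \<le> t i" "t i \<le> real n * \<tau>" using assms(3) by (auto simp: Itau_def)
    from interval_covered_by_translates[OF assms(1,2) this]
    show "\<exists>j. j < n \<and> 0 \<le> t i - real j * \<tau> \<and> t i - real j * \<tau> \<le> \<tau>"
      by blast
  qed
  from bchoice[OF this] obtain f
    where f: "\<forall>i\<in>{..<k+r-1}. f i < n \<and> 0 \<le> t i - real (f i) * \<tau> \<and> t i - real (f i) * \<tau> \<le> \<tau>"
    by blast
  show ?thesis
  proof (rule that[of "\<lambda>i. if i < k + r - 1 then f i else 0"])
    show "(\<lambda>i. if i < k + r - 1 then f i else 0) \<in> index_grid (k + r - 1) n"
      unfolding index_grid_def
      by (rule image_eqI[where x = "restrict f {..<k+r-1}"]) (use f in auto)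
    show "(\<lambda>i. t i - real (if i < k + r - 1 then f i else 0) * \<tau>) \<in> Itau k r \<tau>"
      using f assms(3) by (auto simp: Itau_def)
  qed
qed

lemma flowset_subset_Xd:
  assumes "\<forall>t\<in>I. det (amat k r blk t) = 1" "E \<subseteq> Xd"
  shows "flowset k r blk I E \<subseteq> Xd"
  using assms lat_act_in_Xd by (auto simp: flowset_def)

lemma flowset_scaled_subset:
  assumes det1: "\<And>t. det (amat k r blk t) = 1" and EX: "E \<subseteq> Xd"
    and n: "n \<ge> 1" and \<tau>: "\<tau> > 0"
  shows "flowset k r blk (Itau k r (real n * \<tau>)) E \<subseteq> (\<Union>j\<in>index_grid (k + r - 1) n.
    {L \<in> Xd. lat_act (amat k r blk (\<lambda>i. - (real (j i) * \<tau>))) L \<in> flowset k r blk (Itau k r \<tau>) E})"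
proof
  fix L assume "L \<in> flowset k r blk (Itau k r (real n * \<tau>)) E"
  then obtain t L0 where t: "t \<in> Itau k r (real n * \<tau>)" and L0: "L0 \<in> E"
    and L: "L = lat_act (amat k r blk t) L0"
    unfolding flowset_def by blast
  obtain j where j: "j \<in> index_grid (k + r - 1) n" "(\<lambda>i. t i - real (j i) * \<tau>) \<in> Itau k r \<tau>"
    using Itau_covered_by_translates[OF n \<tau> t] .
  have "lat_act (amat k r blk (\<lambda>i. - (real (j i) * \<tau>))) L
      = lat_act (amat k r blk (\<lambda>i. t i - real (j i) * \<tau>)) L0"
    by (simp add: L lat_act_lat_act amat_mult)
  moreover have "L \<in> Xd" using L L0 EX lat_act_in_Xd[OF det1] by blast
  ultimately show "L \<in> (\<Union>j\<in>index_grid (k + r - 1) n.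
      {L \<in> Xd. lat_act (amat k r blk (\<lambda>i. - (real (j i) * \<tau>))) L \<in> flowset k r blk (Itau k r \<tau>) E})"
    using j L0 unfolding flowset_def by blast
qed

lemma Haar_Xd_translate:
  assumes haar: "is_Haar_Xd m" and det1: "det g = 1" and A: "A \<in> sets m"
  shows "{L \<in> Xd. lat_act g L \<in> A} \<in> sets m" "measure m {L \<in> Xd. lat_act g L \<in> A} = measure m A"
proof -
  have sets_m: "sets m = sets Xd_borel" using haar by (simp add: is_Haar_Xd_def)
  have "lat_act g -` A \<inter> space Xd_borel \<in> sets Xd_borel"
    using A lat_act_measurable[OF det1] sets_m by auto
  then show "{L \<in> Xd. lat_act g L \<in> A} \<in> sets m"
    using sets_m by (simp add: space_Xd_borel Int_def conj_commute)
  show "measure m {L \<in> Xd. lat_act g L \<in> A} = measure m A"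
    using haar A det1 by (simp add: is_Haar_Xd_def measure_def)
qed

lemma measure_flowset_scale_le:
  fixes blk :: "'d::finite \<Rightarrow> nat" and m :: "(real^'d) set measure"
  assumes r: "r \<ge> 1" and blk: "\<forall>i. blk i < k + r" and last_block: "blocksize blk (k + r - 1) > 0"
    and haar: "is_Haar_Xd m" and EX: "E \<subseteq> Xd"
    and A: "\<And>\<tau>. flowset k r blk (Itau k r \<tau>) E \<in> sets m"
    and n: "n \<ge> 1" and \<tau>: "\<tau> > 0"
  shows "measure m (flowset k r blk (Itau k r (real n * \<tau>)) E)
    \<le> real n ^ (k + r - 1) * measure m (flowset k r blk (Itau k r \<tau>) E)"
proof -
  interpret prob_space m using haar by (simp add: is_Haar_Xd_def)
  have det1: "det (amat k r blk t) = 1" for t by (rule det_amat[OF r blk last_block])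
  define J where "J = index_grid (k + r - 1) n"
  define S where "S j = {L \<in> Xd. lat_act (amat k r blk (\<lambda>i. - (real (j i) * \<tau>))) L \<in> flowset k r blk (Itau k r \<tau>) E}" for j
  have S: "S j \<in> sets m" "measure m (S j) = measure m (flowset k r blk (Itau k r \<tau>) E)" for j
    unfolding S_def by (rule Haar_Xd_translate[OF haar det1 A])+
  have "measure m (flowset k r blk (Itau k r (real n * \<tau>)) E) \<le> measure m (\<Union>j\<in>J. S j)"
    using flowset_scaled_subset[OF det1 EX n \<tau>] finite_index_grid S(1)
    by (intro finite_measure_mono) (auto simp: J_def S_def)
  also have "\<dots> \<le> (\<Sum>j\<in>J. measure m (S j))"
    using finite_index_grid S(1) by (intro finite_measure_subadditive_finite) (auto simp: J_def)
  also have "\<dots> = real (card J) * measure m (flowset k r blk (Itau k r \<tau>) E)"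
    by (simp add: S(2))
  also have "\<dots> \<le> real n ^ (k + r - 1) * measure m (flowset k r blk (Itau k r \<tau>) E)"
    using card_index_grid_le by (intro mult_right_mono) (simp_all add: J_def flip: of_nat_power)
  finally show ?thesis .
qed

section \<open>Functions with polynomial scaling\<close>

context
  fixes F :: "real \<Rightarrow> real" and D :: nat
  assumes nonneg: "\<And>t. t > 0 \<Longrightarrow> F t \<ge> 0"
    and mono: "\<And>s t. 0 < s \<Longrightarrow> s \<le> t \<Longrightarrow> F s \<le> F t"
    and scale: "\<And>n t. n \<ge> 1 \<Longrightarrow> t > 0 \<Longrightarrow> F (real n * t) \<le> real n ^ D * F t"
begin

lemma ratio_lower_bound:
  assumes "0 < t" "t < t0"
  shows "F t0 / (t0 + t) ^ D \<le> F t / t ^ D"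
proof -
  define n where "n = nat \<lceil>t0 / t\<rceil>"
  have "t0 / t > 1" using assms by simp
  then have n: "n \<ge> 1" "t0 / t \<le> real n" "real n < t0 / t + 1"
    unfolding n_def by linarith+
  then have le: "t0 / real n \<le> t" and pos: "t0 / real n > 0" and "real n * t \<le> t0 + t"
    using assms by (simp_all add: field_simps)
  have "F t0 = F (real n * (t0 / real n))" using n by simp
  also have "\<dots> \<le> real n ^ D * F (t0 / real n)" using n(1) pos by (rule scale)
  also have "\<dots> \<le> real n ^ D * F t" using le pos by (intro mult_left_mono mono) auto
  finally have "F t0 \<le> real n ^ D * F t" .
  have "F t0 / (t0 + t) ^ D \<le> F t0 / (real n * t) ^ D"
    using nonneg[of t0] assms n \<open>real n * t \<le> t0 + t\<close>
    by (intro divide_left_mono power_mono) auto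
  also have "\<dots> = F t0 / (real n ^ D * t ^ D)" by (simp add: power_mult_distrib)
  also have "\<dots> \<le> real n ^ D * F t / (real n ^ D * t ^ D)"
    using \<open>F t0 \<le> real n ^ D * F t\<close> assms by (intro divide_right_mono) simp_all
  also have "\<dots> = F t / t ^ D" using n by simp
  finally show ?thesis .
qed

lemma tendsto_ratio_SUP_at_right_0:
  "((\<lambda>t. ennreal (F t) / ennreal (t ^ D)) \<longlongrightarrow> (SUP t\<in>{0<..}. ennreal (F t) / ennreal (t ^ D))) (at_right 0)"
    (is "(?g \<longlongrightarrow> ?S) _")
proof (rule order_tendstoI)
  have pos: "eventually (\<lambda>t::real. t > 0) (at_right 0)" by (simp add: eventually_at_right_less)
  have g_eq: "?g t = ennreal (F t / t ^ D)" if "t > 0" for t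
    using that nonneg[OF that] by (simp add: divide_ennreal)
  show "eventually (\<lambda>t. ?g t < a) (at_right 0)" if a: "a > ?S" for a
  proof (rule eventually_mono[OF pos])
    fix t :: real assume "t > 0"
    then have "?g t \<le> ?S" by (intro SUP_upper) simp
    then show "?g t < a" using a by simp
  qed
  show "eventually (\<lambda>t. a < ?g t) (at_right 0)" if "a < ?S" for a
  proof -
    obtain t0 where t0: "t0 > 0" "a < ?g t0" using \<open>a < ?S\<close> by (auto simp: less_SUP_iff)
    then obtain a' where a': "a = ennreal a'" "0 \<le> a'" "a' < F t0 / t0 ^ D"
      by (cases a) (auto simp: g_eq ennreal_less_iff)
    have "((\<lambda>t. F t0 / (t0 + t) ^ D) \<longlongrightarrow> F t0 / (t0 + 0) ^ D) (at_right 0)"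
      using t0(1) by (intro tendsto_intros) auto
    then have "eventually (\<lambda>t. a' < F t0 / (t0 + t) ^ D) (at_right 0)"
      using a'(3) by (simp add: order_tendstoD(1))
    moreover have "eventually (\<lambda>t::real. t < t0) (at_right 0)"
      using t0(1) eventually_at_right_field by blast
    ultimately show ?thesis
    proof (elim eventually_rev_mp[OF eventually_conj[OF pos]] eventually_mono, intro impI)
      fix t :: real assume "0 < t \<and> a' < F t0 / (t0 + t) ^ D" "t < t0"
      then show "a < ?g t"
        using ratio_lower_bound[of t t0] a' g_eq[of t] by (auto simp: ennreal_less_iff)
    qed
  qed
qed

end

lemma flowset_in_Xd_borel:
  fixes N :: "nat \<Rightarrow> real^'d::finite \<Rightarrow> real"
  assumes r: "r \<ge> 1" and blk: "\<forall>i. blk i < k + r" and last_block: "blocksize blk (k + r - 1) > 0"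
    and norms: "\<forall>b < k + r - 1. is_block_norm blk b (N b)"
    and E: "E \<subseteq> Seps k r blk N \<epsilon>" and Em: "E \<in> sets Xd_borel"
  shows "flowset k r blk (Itau k r \<tau>) E \<in> sets Xd_borel"
proof (rule in_Xd_borel_if_vimage_lat_of_borel)
  show "flowset k r blk (Itau k r \<tau>) E \<subseteq> Xd"
    using E det_amat[OF r blk last_block] by (intro flowset_subset_Xd) (auto simp: Seps_def)
  show "{g \<in> unimod_mats. lat_of g \<in> flowset k r blk (Itau k r \<tau>) E} \<in> sets borel"
    by (rule vimage_lat_of_flowset_borel[OF r blk last_block norms E Em])
qed

theorem lemma5p3:
  fixes k r :: nat and blk :: "'d::finite \<Rightarrow> nat" and N :: "nat \<Rightarrow> real^'d \<Rightarrow> real"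
    and \<epsilon> :: real and m :: "(real^'d) set measure" and E :: "(real^'d) set set"
  assumes "k \<ge> 1" and "r \<ge> 1"
    and "\<forall>i. blk i < k + r"
    and "\<forall>b < k + r. \<exists>i. blk i = b"
    and "\<forall>b < k + r. is_block_norm blk b (N b)"
    and "is_Haar_Xd m"
    and "E \<in> sets m" and "E \<subseteq> Seps k r blk N \<epsilon>"
  shows "((\<lambda>\<tau>. emeasure (completion m) (flowset k r blk (Itau k r \<tau>) E) / ennreal (\<tau> ^ (k + r - 1)))
            \<longlongrightarrow> muS m k r blk E) (at_right 0)"
proof -
  note r = assms(2) and blk = assms(3) and haar = assms(6) and E = assms(8)
  interpret prob_space m using haar by (simp add: is_Haar_Xd_def)
  have sets_m: "sets m = sets Xd_borel" using haar by (simp add: is_Haar_Xd_def)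
  have last_block: "blocksize blk (k + r - 1) > 0"
    using assms(4) r by (fastforce simp: blocksize_def card_gt_0_iff)
  have norms: "\<forall>b < k + r - 1. is_block_norm blk b (N b)" using assms(5) by simp
  define A where "A \<tau> = flowset k r blk (Itau k r \<tau>) E" for \<tau>
  have A: "A \<tau> \<in> sets m" for \<tau>
    using flowset_in_Xd_borel[OF r blk last_block norms E] assms(7) sets_m by (simp add: A_def)
  have "((\<lambda>\<tau>. ennreal (measure m (A \<tau>)) / ennreal (\<tau> ^ (k + r - 1)))
      \<longlongrightarrow> (SUP \<tau>\<in>{0<..}. ennreal (measure m (A \<tau>)) / ennreal (\<tau> ^ (k + r - 1)))) (at_right 0)"
  proof (rule tendsto_ratio_SUP_at_right_0)
    show "measure m (A s) \<le> measure m (A t)" if "0 < s" "s \<le> t" for s t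
      using that A Itau_mono[of s t k r] by (intro finite_measure_mono) (auto simp: A_def flowset_def)
    show "measure m (A (real n * t)) \<le> real n ^ (k + r - 1) * measure m (A t)" if "n \<ge> 1" "t > 0" for n t
      using measure_flowset_scale_le[OF r blk last_block haar _ A[unfolded A_def] that] E
      by (auto simp: A_def Seps_def)
  qed simp
  moreover have "emeasure (completion m) (A \<tau>) = ennreal (measure m (A \<tau>))" for \<tau>
    using A by (simp add: emeasure_eq_measure)
  ultimately show ?thesis by (simp add: muS_def A_def)
qed

end
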